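(* Let $g\colon(0,1)\to\mathbb{R}$ be a continuous, strictly increasing function such that $g(1-a)=-g(a)$ for all $a\in(0,1)$ and $\lim_{a\to0^+}g(a)=-\infty$. Extend $g$ by $g(0)=-\infty$, $g(1)=\infty$, and extend $g^{-1}\colon\mathbb{R}\to(0,1)$ by $g^{-1}(-\infty)=0$, $g^{-1}(\infty)=1$. Then the function \[ J(a,b)=g^{-1}\bigl(g(a)-g(b)\bigr),\qquad (a,b)\in[0,1]^2\setminus\{(0,0),(1,1)\}, \] is an involutive Jamesian function.
   Context: Let $D=[0,1]^2\setminus\{(0,0),(1,1)\}$. A function $J\colon D\to\mathbb{R}$ is called Jamesian if it satisfies, for all $(a,b)\in D$: (a) $J(a,\tfrac12)=a$; (b) $J(a,0)=1$ for $0<a\le 1$; (c) $J(b,a)=1-J(a,b)$; (d) $J(1-b,1-a)=J(a,b)$; (e) $J(a,b)$ is a non-decreasing function of $a$ for each $0\le b\le 1$ and a strictly increasing function of $a$ for each $0<b<1$. A Jamesian function is called involutive if in addition $J(a,J(a,b))=b$ whenever $0<a<1$ and $0\le b\le 1$. In the formula for $J$, the conventions $-\infty-\infty=-\infty$, $\infty-(-\infty)=\infty$, $t\pm\infty=\pm\infty$ and $\pm\infty - t=\pm\infty$ for real $t$ are used. *)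

theory Defs
  imports "HOL-Analysis.Analysis" "HOL-Library.Extended_Real"
begin

definition jamesD :: "(real \<times> real) set" where
  "jamesD = {(a, b). 0 \<le> a \<and> a \<le> 1 \<and> 0 \<le> b \<and> b \<le> 1} - {(0, 0), (1, 1)}"

definition jamesian :: "(real \<Rightarrow> real \<Rightarrow> real) \<Rightarrow> bool" where
  "jamesian J \<longleftrightarrow>
     (\<forall>a. 0 \<le> a \<and> a \<le> 1 \<longrightarrow> J a (1/2) = a) \<and>
     (\<forall>a. 0 < a \<and> a \<le> 1 \<longrightarrow> J a 0 = 1) \<and>
     (\<forall>(a, b) \<in> jamesD. J b a = 1 - J a b) \<and>
     (\<forall>(a, b) \<in> jamesD. J (1 - b) (1 - a) = J a b) \<and>
     (\<forall>b. 0 \<le> b \<and> b \<le> 1 \<longrightarrow> mono_on {a. (a, b) \<in> jamesD} (\<lambda>a. J a b)) \<and>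
     (\<forall>b. 0 < b \<and> b < 1 \<longrightarrow> strict_mono_on {a. (a, b) \<in> jamesD} (\<lambda>a. J a b))"

definition involutive_jamesian :: "(real \<Rightarrow> real \<Rightarrow> real) \<Rightarrow> bool" where
  "involutive_jamesian J \<longleftrightarrow> jamesian J \<and>
     (\<forall>a b. 0 < a \<and> a < 1 \<and> 0 \<le> b \<and> b \<le> 1 \<longrightarrow> J a (J a b) = b)"

definition gext :: "(real \<Rightarrow> real) \<Rightarrow> real \<Rightarrow> ereal" where
  "gext g a = (if a = 0 then -\<infinity> else if a = 1 then \<infinity> else ereal (g a))"

definition ginv :: "(real \<Rightarrow> real) \<Rightarrow> ereal \<Rightarrow> real" where
  "ginv g x = (if x = -\<infinity> then 0 else if x = \<infinity> then 1
               else (THE a. 0 < a \<and> a < 1 \<and> g a = real_of_ereal x))"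

end

theory Submission
  imports Defs
begin

text \<open>The extension \<open>G = gext g\<close> is an order isomorphism from \<open>[0,1]\<close> onto the extended
  reals with inverse \<open>ginv g\<close>: \<open>g\<close> is odd about \<open>1/2\<close> and tends to \<open>-\<infinity>\<close> at \<open>0\<close>, hence also
  to \<open>\<infinity>\<close> at \<open>1\<close>, so by the intermediate value theorem it maps \<open>(0,1)\<close> onto \<open>\<real>\<close>.
  Moreover \<open>G (1/2) = 0\<close> and \<open>G (1 - a) = - G a\<close>. Thus \<open>J a b = G\<^sup>-\<^sup>1 (G a - G b)\<close> is
  subtraction transported along \<open>G\<close>, and each Jamesian axiom is a property of subtraction on
  the extended reals: \<open>x - 0 = x\<close>, \<open>x - (-\<infinity>) = \<infinity>\<close>, antisymmetry, \<open>-y - -x = x - y\<close>,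
  monotonicity in \<open>x\<close>, and \<open>x - (x - y) = y\<close> for finite \<open>x\<close>.\<close>

lemma jamesD_iff:
  "(a, b) \<in> jamesD \<longleftrightarrow>
     a \<in> {0..1} \<and> b \<in> {0..1} \<and> \<not> (a = 0 \<and> b = 0) \<and> \<not> (a = 1 \<and> b = 1)"
  by (auto simp: jamesD_def)

locale odd_sigmoid =
  fixes g :: "real \<Rightarrow> real"
  assumes continuous: "continuous_on {0<..<1} g"
    and strict_mono: "strict_mono_on {0<..<1} g"
    and odd: "\<forall>a\<in>{0<..<1}. g (1 - a) = - g a"
    and tendsto_at_bot: "filterlim g at_bot (at_right 0)"
begin

lemma g_half: "g (1/2) = 0"
  using odd[rule_format, of "1/2"] by simp

lemma gext_half: "gext g (1/2) = 0"
  by (simp add: gext_def g_half zero_ereal_def)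

lemma g_less_iff: "a \<in> {0<..<1} \<Longrightarrow> b \<in> {0<..<1} \<Longrightarrow> g a < g b \<longleftrightarrow> a < b"
  using strict_mono_on_less[OF strict_mono] by blast

lemma g_eq_iff: "a \<in> {0<..<1} \<Longrightarrow> b \<in> {0<..<1} \<Longrightarrow> g a = g b \<longleftrightarrow> a = b"
  using g_less_iff by (metis linorder_neqE_linordered_idom order_less_irrefl)

lemma g_le_somewhere: "\<exists>a. 0 < a \<and> a \<le> 1/2 \<and> g a \<le> z"
proof -
  from tendsto_at_bot have "eventually (\<lambda>x. g x \<le> z) (at_right 0)"
    by (simp add: filterlim_at_bot)
  then obtain b where "b > 0" "\<And>y. y > 0 \<Longrightarrow> y < b \<Longrightarrow> g y \<le> z"
    unfolding eventually_at_right_field by auto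
  then show ?thesis
    by (intro exI[of _ "min (b/2) (1/2)"]) auto
qed

lemma g_surj: "\<exists>t\<in>{0<..<1}. g t = y"
proof -
  obtain a where a: "0 < a" "a \<le> 1/2" "g a \<le> y"
    using g_le_somewhere by blast
  obtain c where c: "0 < c" "c \<le> 1/2" "g c \<le> -y"
    using g_le_somewhere by blast
  have "y \<le> g (1 - c)"
    using odd c by auto
  moreover have "continuous_on {a..1-c} g"
    by (rule continuous_on_subset[OF continuous]) (use a c in auto)
  ultimately obtain x where "a \<le> x" "x \<le> 1 - c" "g x = y"
    using IVT'[of g a y "1-c"] a c by auto
  with a c show ?thesis
    by (intro bexI[of _ x]) auto
qed

lemma ginv_g: "t \<in> {0<..<1} \<Longrightarrow> ginv g (ereal (g t)) = t"
  unfolding ginv_def by (auto intro!: the_equality simp: g_eq_iff)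

lemma ginv_gext: "0 \<le> a \<Longrightarrow> a \<le> 1 \<Longrightarrow> ginv g (gext g a) = a"
  by (auto simp: gext_def ginv_def[of g "-\<infinity>"] ginv_def[of g "\<infinity>"] ginv_g)

lemma gext_ginv: "gext g (ginv g x) = x"
proof (cases x)
  case (real y)
  obtain t where "t \<in> {0<..<1}" "g t = y"
    using g_surj by blast
  with real show ?thesis
    using ginv_g[of t] by (auto simp: gext_def)
qed (auto simp: gext_def ginv_def)

lemma ginv_range: "0 \<le> ginv g x \<and> ginv g x \<le> 1"
proof (cases x)
  case (real y)
  obtain t where "t \<in> {0<..<1}" "g t = y"
    using g_surj by blast
  with real show ?thesis
    using ginv_g[of t] by auto
qed (auto simp: ginv_def)

lemma gext_one_minus: "0 \<le> a \<Longrightarrow> a \<le> 1 \<Longrightarrow> gext g (1 - a) = - gext g a"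
  using odd by (auto simp: gext_def)

lemma ginv_uminus: "ginv g (- x) = 1 - ginv g x"
proof -
  have "ginv g (- x) = ginv g (- gext g (ginv g x))"
    by (simp add: gext_ginv)
  also have "\<dots> = ginv g (gext g (1 - ginv g x))"
    using ginv_range gext_one_minus by simp
  also have "\<dots> = 1 - ginv g x"
    using ginv_range ginv_gext by simp
  finally show ?thesis .
qed

lemma gext_less_iff:
  "a \<in> {0..1} \<Longrightarrow> b \<in> {0..1} \<Longrightarrow> gext g a < gext g b \<longleftrightarrow> a < b"
  by (auto simp: gext_def g_less_iff)

lemma ginv_less_iff: "ginv g x < ginv g y \<longleftrightarrow> x < y"
  using gext_less_iff[of "ginv g x" "ginv g y"] ginv_range by (simp add: gext_ginv)

lemma gext_diff_swap:
  "(a, b) \<in> jamesD \<Longrightarrow> gext g b - gext g a = - (gext g a - gext g b)"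
  by (auto simp: jamesD_iff gext_def)

lemma gext_diff_reflect:
  assumes "(a, b) \<in> jamesD"
  shows "gext g (1 - b) - gext g (1 - a) = gext g a - gext g b"
proof -
  have "\<And>x y :: ereal. - y - - x = x - y"
    by (case_tac x; case_tac y) auto
  with assms show ?thesis
    by (simp add: jamesD_iff gext_one_minus)
qed

text \<open>Subtracting the finite value \<open>gext g b\<close> is strictly monotone; for \<open>b \<in> {0, 1}\<close> the
  function \<open>\<lambda>a. J a b\<close> is instead constant on its domain (equal to \<open>1\<close>, resp. \<open>0\<close>).\<close>

lemma james_strict_mono_first:
  assumes "b \<in> {0<..<1}" "a \<in> {0..1}" "a' \<in> {0..1}" "a < a'"
  shows "ginv g (gext g a - gext g b) < ginv g (gext g a' - gext g b)"
proof -
  have "gext g a < gext g a'"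
    using assms gext_less_iff by auto
  with assms(1) show ?thesis
    by (cases "gext g a"; cases "gext g a'") (auto simp: gext_def ginv_less_iff)
qed

lemma james_jamesian: "jamesian (\<lambda>a b. ginv g (gext g a - gext g b))"
  unfolding jamesian_def
proof (intro conjI allI impI ballI)
  fix a :: real assume "0 \<le> a \<and> a \<le> 1"
  then show "ginv g (gext g a - gext g (1/2)) = a"
    by (simp add: gext_half ginv_gext)
next
  fix a :: real assume "0 < a \<and> a \<le> 1"
  then show "ginv g (gext g a - gext g 0) = 1"
    by (auto simp: gext_def ginv_def)
next
  fix p assume "p \<in> jamesD"
  then show "case p of (a, b) \<Rightarrow> ginv g (gext g b - gext g a) = 1 - ginv g (gext g a - gext g b)"
    by (auto simp: gext_diff_swap ginv_uminus)
next
  fix p assume "p \<in> jamesD"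
  then show "case p of (a, b) \<Rightarrow>
      ginv g (gext g (1 - b) - gext g (1 - a)) = ginv g (gext g a - gext g b)"
    by (auto simp: gext_diff_reflect)
next
  fix b :: real assume b: "0 \<le> b \<and> b \<le> 1"
  show "mono_on {a. (a, b) \<in> jamesD} (\<lambda>a. ginv g (gext g a - gext g b))"
  proof (cases "b = 0 \<or> b = 1")
    case True
    then show ?thesis
      by (auto intro!: mono_onI simp: jamesD_iff gext_def ginv_def)
  next
    case False
    with b show ?thesis
      by (intro mono_onI) (auto simp: jamesD_iff le_less james_strict_mono_first)
  qed
next
  fix b :: real assume "0 < b \<and> b < 1"
  then show "strict_mono_on {a. (a, b) \<in> jamesD} (\<lambda>a. ginv g (gext g a - gext g b))"
    by (intro strict_mono_onI) (auto simp: jamesD_iff james_strict_mono_first)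
qed

lemma james_involutive:
  assumes "a \<in> {0<..<1}" "b \<in> {0..1}"
  shows "ginv g (gext g a - gext g (ginv g (gext g a - gext g b))) = b"
proof -
  have "gext g a - (gext g a - gext g b) = gext g b"
    using assms(1) by (cases "gext g b") (auto simp: gext_def)
  with assms show ?thesis
    by (simp add: gext_ginv ginv_gext)
qed

end

theorem theorem5p3:
  fixes g :: "real \<Rightarrow> real"
  assumes "continuous_on {0<..<1} g"
    and "strict_mono_on {0<..<1} g"
    and "\<forall>a\<in>{0<..<1}. g (1 - a) = - g a"
    and "filterlim g at_bot (at_right 0)"
  shows "involutive_jamesian (\<lambda>a b. ginv g (gext g a - gext g b))"
proof -
  interpret odd_sigmoid g
    using assms by unfold_locales
  show ?thesis
    unfolding involutive_jamesian_def
    using james_jamesian james_involutive by auto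
qed

end
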